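(* Let $h(p):=-s_\phi(p,p)$, $C:=\mathbb{E}[Q\mid S]$, and let $S_B$ be a binned version of $S$. Then $$\underbrace{\mathbb{E}[\mathrm{Var}_h(Q\mid S_B)]}_{\mathrm{GL}(S_B)}=\underbrace{\mathbb{E}[\mathrm{Var}_h(Q\mid S)]}_{\mathrm{GL}(S)}+\underbrace{\mathbb{E}[\mathrm{Var}_h(C\mid S_B)]}_{\mathrm{GL}_{\mathrm{induced}}(S,S_B)}.$$ Moreover, if the scoring rule $\phi$ is proper, then $\mathrm{GL}_{\mathrm{induced}}(S,S_B)\ge0$.
   Context: Let $(X,Y)$ be jointly distributed with $X\in\mathcal{X}$ and $Y\in\{e_1,\dots,e_K\}$ (one-hot vectors of $\mathbb{R}^K$); $\Delta_K$ is the probability simplex; $Q\in\Delta_K$ with $Q_k:=P(Y=e_k\mid X)$; $S=f(X)\in\Delta_K$ for a classifier $f$. A scoring rule is $\phi:\Delta_K\times\{e_1,\dots,e_K\}\to\mathbb{R}$, with $s_\phi(P,q):=\sum_k\phi(P,e_k)q_k$ and $d_\phi(P,q):=s_\phi(P,q)-s_\phi(q,q)$; $\phi$ is proper if $d_\phi\ge0$. For $f:\mathbb{R}^d\to\mathbb{R}$, $\mathrm{Var}_f(U\mid V):=\mathbb{E}[f(U)\mid V]-f(\mathbb{E}[U\mid V])$. Binned classifier: given a partition $\{\mathcal{B}_j\}_{1\le j\le J}$ of $\Delta_K$, $S_B$ is the random variable equal to $\mathbb{E}[S\mid S\in\mathcal{B}_j]$ on the event $\{S\in\mathcal{B}_j\}$.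 All required expectations are assumed to exist. *)

theory Defs
  imports "HOL-Probability.Probability"
begin

text \<open>Probability simplex in R^K (K = CARD('k)); one-hot vectors are axis k 1.\<close>
definition prob_simplex :: "(real^'k::finite) set" where
  "prob_simplex = {p. (\<forall>k. 0 \<le> p$k) \<and> (\<Sum>k\<in>UNIV. p$k) = 1}"

definition s_phi :: "(real^'k::finite \<Rightarrow> real^'k \<Rightarrow> real) \<Rightarrow> real^'k \<Rightarrow> real^'k \<Rightarrow> real" where
  "s_phi \<phi> P q = (\<Sum>k\<in>UNIV. \<phi> P (axis k 1) * q$k)"

definition d_phi :: "(real^'k::finite \<Rightarrow> real^'k \<Rightarrow> real) \<Rightarrow> real^'k \<Rightarrow> real^'k \<Rightarrow> real" where
  "d_phi \<phi> P q = s_phi \<phi> P q - s_phi \<phi> q q"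

definition proper_scoring :: "(real^'k::finite \<Rightarrow> real^'k \<Rightarrow> real) \<Rightarrow> bool" where
  "proper_scoring \<phi> \<longleftrightarrow> (\<forall>P\<in>prob_simplex. \<forall>q\<in>prob_simplex. d_phi \<phi> P q \<ge> 0)"

definition gen_alg :: "'a measure \<Rightarrow> ('a \<Rightarrow> 'b) \<Rightarrow> 'b measure \<Rightarrow> 'a measure" where
  "gen_alg M V N = vimage_algebra (space M) V N"

definition cexp :: "'a measure \<Rightarrow> ('a \<Rightarrow> 'b) \<Rightarrow> 'b measure \<Rightarrow> ('a \<Rightarrow> real) \<Rightarrow> 'a \<Rightarrow> real" where
  "cexp M V N f = real_cond_exp M (gen_alg M V N) f"

definition cexp_vec :: "'a measure \<Rightarrow> ('a \<Rightarrow> 'b) \<Rightarrow> 'b measure \<Rightarrow> ('a \<Rightarrow> real^'k::finite) \<Rightarrow> 'a \<Rightarrow> real^'k" where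
  "cexp_vec M V N U = (\<lambda>\<omega>. \<chi> k. cexp M V N (\<lambda>\<omega>'. U \<omega>' $ k) \<omega>)"

definition var_h :: "'a measure \<Rightarrow> (real^'k::finite \<Rightarrow> real) \<Rightarrow> ('a \<Rightarrow> 'b) \<Rightarrow> 'b measure \<Rightarrow> ('a \<Rightarrow> real^'k) \<Rightarrow> 'a \<Rightarrow> real" where
  "var_h M h V N U = (\<lambda>\<omega>. cexp M V N (\<lambda>\<omega>'. h (U \<omega>')) \<omega> - h (cexp_vec M V N U \<omega>))"

definition bin_mean :: "'a measure \<Rightarrow> ('a \<Rightarrow> real^'k::finite) \<Rightarrow> 'a set \<Rightarrow> real^'k" where
  "bin_mean M S A = (1 / measure M A) *\<^sub>R (\<integral>\<omega>\<in>A. S \<omega> \<partial>M)"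

definition binned :: "'a measure \<Rightarrow> ('a \<Rightarrow> real^'k::finite) \<Rightarrow> (real^'k) set set \<Rightarrow> 'a \<Rightarrow> real^'k" where
  "binned M S \<B> = (\<lambda>\<omega>. \<Sum>B\<in>\<B>. indicator (S -` B \<inter> space M) \<omega> *\<^sub>R bin_mean M S (S -` B \<inter> space M))"

end

theory Submission
  imports Defs
begin

text \<open>
  By the tower property, \<open>E[Var_h(U | V)] = E[h(U)] - E[h(E[U | V])]\<close>. Since \<open>S_B\<close> is a
  function of \<open>S\<close>, conditioning \<open>Q\<close> on \<open>S_B\<close> gives the same result as conditioning
  \<open>C = E[Q | S]\<close> on \<open>S_B\<close>, and the three expected variances telescope.

  For the sign, let \<open>D = E[C | S_B]\<close>, so that \<open>h(D) = - s_phi(D, D)\<close>. As \<open>S_B\<close> takes only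
  finitely many values, every function of \<open>D\<close>, in particular each score \<open>phi(D, e_k)\<close>, is
  \<open>S_B\<close>-measurable, with no measurability of \<open>phi\<close> required. Hence
  \<open>E[s_phi(D, D)] = E[s_phi(D, C)]\<close>, and properness gives \<open>s_phi(D, C) \<ge> s_phi(C, C)\<close>.
\<close>

lemma sigma_finite_subalgebra_gen_alg:
  assumes "prob_space M" "V \<in> measurable M N"
  shows "sigma_finite_subalgebra M (gen_alg M V N)"
proof -
  have "subalgebra M (gen_alg M V N)"
    unfolding subalgebra_def gen_alg_def
    using sets_image_in_sets[of M "space M" V N] assms(2) by simp
  with assms(1) have "finite_measure_subalgebra M (gen_alg M V N)"
    unfolding finite_measure_subalgebra_def finite_measure_subalgebra_axioms_def prob_space_def
    by blast
  then show ?thesis by (rule finite_measure_subalgebra_is_sigma_finite)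
qed

lemma subalgebra_gen_alg_coarser:
  assumes "W \<in> measurable (gen_alg M V N) N'"
  shows "subalgebra (gen_alg M V N) (gen_alg M W N')"
  using sets_image_in_sets[of "gen_alg M V N" "space M" W N'] assms
  by (simp add: subalgebra_def gen_alg_def)

lemma measurable_gen_alg_fiberwise_const:
  fixes g :: "'a \<Rightarrow> real"
  assumes "g \<in> borel_measurable (gen_alg M V N)" "V \<in> space M \<rightarrow> space N"
    and "\<omega> \<in> space M" "\<omega>' \<in> space M" "V \<omega> = V \<omega>'"
  shows "g \<omega> = g \<omega>'"
proof -
  have "g -` {g \<omega>} \<inter> space M \<in> sets (gen_alg M V N)"
    using measurable_sets[OF assms(1), of "{g \<omega>}"] by (simp add: gen_alg_def)
  then obtain A where A: "g -` {g \<omega>} \<inter> space M = V -` A \<inter> space M"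
    using sets_vimage_algebra2[OF assms(2)] unfolding gen_alg_def by blast
  have "\<omega>' \<in> V -` A \<inter> space M"
    using A assms(3-5) by (metis IntD1 IntI insertI1 vimageE vimageI)
  then have "\<omega>' \<in> g -` {g \<omega>} \<inter> space M"
    using A by simp
  then show ?thesis
    by simp
qed

lemma measurable_gen_alg_finite_range:
  fixes V :: "'a \<Rightarrow> 'b::t1_space" and g :: "'a \<Rightarrow> real"
  assumes "finite (V ` space M)"
    and "\<And>\<omega> \<omega>'. \<omega> \<in> space M \<Longrightarrow> \<omega>' \<in> space M \<Longrightarrow> V \<omega> = V \<omega>' \<Longrightarrow> g \<omega> = g \<omega>'"
  shows "g \<in> borel_measurable (gen_alg M V borel)"
proof (rule measurableI)
  fix A :: "real set"
  let ?T = "V ` {\<omega> \<in> space M. g \<omega> \<in> A}"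
  have "finite ?T"
    using assms(1) by (rule finite_subset[rotated]) blast
  then have "V -` ?T \<inter> space M \<in> sets (gen_alg M V borel)"
    unfolding gen_alg_def by (intro in_vimage_algebra borel_closed finite_imp_closed)
  moreover have "V -` ?T \<inter> space M \<subseteq> g -` A"
  proof
    fix \<omega> assume "\<omega> \<in> V -` ?T \<inter> space M"
    then obtain \<omega>' where "\<omega>' \<in> space M" "g \<omega>' \<in> A" "V \<omega> = V \<omega>'" "\<omega> \<in> space M"
      by blast
    then show "\<omega> \<in> g -` A"
      using assms(2)[of \<omega> \<omega>'] by simp
  qed
  then have "V -` ?T \<inter> space M = g -` A \<inter> space (gen_alg M V borel)"
    by (auto simp: gen_alg_def)
  ultimately show "g -` A \<inter> space (gen_alg M V borel) \<in> sets (gen_alg M V borel)"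
    by simp
qed (simp add: gen_alg_def)

lemma finite_image_fiberwise_const:
  assumes "finite (V ` A)" and "\<And>x y. x \<in> A \<Longrightarrow> y \<in> A \<Longrightarrow> V x = V y \<Longrightarrow> g x = g y"
  shows "finite (g ` A)"
proof -
  have "\<forall>v\<in>V ` A. \<exists>x. x \<in> A \<and> V x = v"
    by blast
  from bchoice[OF this] obtain r where r: "\<forall>v\<in>V ` A. r v \<in> A \<and> V (r v) = v"
    by blast
  have "g x = g (r (V x))" if "x \<in> A" for x
    using r that by (intro assms(2)) auto
  then have "g ` A = (\<lambda>v. g (r v)) ` V ` A"
    by (simp add: image_image cong: image_cong)
  then show ?thesis
    using assms(1) by simp
qed

lemma integrable_finite_range_mult:
  fixes g f :: "'a \<Rightarrow> real"
  assumes "finite (g ` space M)" "g \<in> borel_measurable M" "integrable M f"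
  shows "integrable M (\<lambda>\<omega>. g \<omega> * f \<omega>)"
proof -
  obtain b where b: "\<And>\<omega>. \<omega> \<in> space M \<Longrightarrow> \<bar>g \<omega>\<bar> \<le> b"
    using finite_imp_bounded[OF assms(1)] by (auto simp: bounded_iff)
  show ?thesis
  proof (rule Bochner_Integration.integrable_bound)
    show "integrable M (\<lambda>\<omega>. b * \<bar>f \<omega>\<bar>)"
      using assms(3) by simp
    show "AE \<omega> in M. norm (g \<omega> * f \<omega>) \<le> norm (b * \<bar>f \<omega>\<bar>)"
    proof (intro AE_I2)
      fix \<omega> assume "\<omega> \<in> space M"
      then have "\<bar>g \<omega>\<bar> * \<bar>f \<omega>\<bar> \<le> \<bar>b\<bar> * \<bar>f \<omega>\<bar>"
        using b by (intro mult_right_mono) fastforce+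
      then show "norm (g \<omega> * f \<omega>) \<le> norm (b * \<bar>f \<omega>\<bar>)"
        by (simp add: abs_mult)
    qed
  qed (use assms in measurable)
qed

lemma cexp_vec_nth:
  "cexp_vec M V N U \<omega> $ k = real_cond_exp M (gen_alg M V N) (\<lambda>\<omega>. U \<omega> $ k) \<omega>"
  by (simp add: cexp_vec_def cexp_def)

lemma borel_measurable_cexp_vec_nth:
  "(\<lambda>\<omega>. cexp_vec M V N U \<omega> $ k) \<in> borel_measurable (gen_alg M V N)"
  unfolding cexp_vec_nth by (rule borel_measurable_cond_exp)

lemma integrable_cexp_vec_nth:
  assumes "prob_space M" "V \<in> measurable M N" "integrable M (\<lambda>\<omega>. U \<omega> $ k)"
  shows "integrable M (\<lambda>\<omega>. cexp_vec M V N U \<omega> $ k)"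
  unfolding cexp_vec_nth
  using sigma_finite_subalgebra.real_cond_exp_int(1)[OF sigma_finite_subalgebra_gen_alg[OF assms(1,2)] assms(3)] .

lemma cexp_vec_in_prob_simplex:
  fixes U :: "'a \<Rightarrow> real^'k::finite"
  assumes "prob_space M" "V \<in> measurable M N" "\<And>k. integrable M (\<lambda>\<omega>. U \<omega> $ k)"
    and "AE \<omega> in M. U \<omega> \<in> prob_simplex"
  shows "AE \<omega> in M. cexp_vec M V N U \<omega> \<in> prob_simplex"
proof -
  interpret prob_space M
    by fact
  interpret sigma_finite_subalgebra M "gen_alg M V N"
    by (rule sigma_finite_subalgebra_gen_alg[OF assms(1,2)])
  let ?E = "real_cond_exp M (gen_alg M V N)"
  have nonneg: "AE \<omega> in M. \<forall>k\<in>UNIV. ?E (\<lambda>\<omega>. U \<omega> $ k) \<omega> \<ge> 0"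
  proof (rule AE_finite_allI)
    fix k
    show "AE \<omega> in M. ?E (\<lambda>\<omega>. U \<omega> $ k) \<omega> \<ge> 0"
      using assms(3,4) by (intro real_cond_exp_pos) (auto simp: prob_simplex_def elim: AE_mp)
  qed simp
  have "AE \<omega> in M. ?E (\<lambda>\<omega>. \<Sum>k\<in>UNIV. U \<omega> $ k) \<omega> = (\<Sum>k\<in>UNIV. ?E (\<lambda>\<omega>. U \<omega> $ k) \<omega>)"
    using assms(3) by (rule real_cond_exp_sum)
  moreover have "AE \<omega> in M. ?E (\<lambda>\<omega>. \<Sum>k\<in>UNIV. U \<omega> $ k) \<omega> = ?E (\<lambda>\<omega>. 1) \<omega>"
    using assms(3,4) by (intro real_cond_exp_cong) (auto simp: prob_simplex_def elim: AE_mp)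
  moreover have "AE \<omega> in M. ?E (\<lambda>\<omega>. 1) \<omega> = 1"
    by (rule real_cond_exp_F_meas) auto
  ultimately show ?thesis
    using nonneg by eventually_elim (simp add: prob_simplex_def cexp_vec_nth)
qed

lemma integrable_nth_prob_simplex:
  fixes U :: "'a \<Rightarrow> real^'k::finite"
  assumes "prob_space M" "U \<in> borel_measurable M" "AE \<omega> in M. U \<omega> \<in> prob_simplex"
  shows "integrable M (\<lambda>\<omega>. U \<omega> $ k)"
proof (rule finite_measure.integrable_const_bound[where B=1])
  show "finite_measure M"
    using assms(1) by (rule prob_space.finite_measure)
  show "AE \<omega> in M. norm (U \<omega> $ k) \<le> 1"
    using assms(3)
  proof eventually_elim
    case (elim \<omega>)
    then have "U \<omega> $ k \<le> (\<Sum>j\<in>UNIV. U \<omega> $ j)"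
      by (intro member_le_sum) (auto simp: prob_simplex_def)
    with elim show ?case
      by (auto simp: prob_simplex_def)
  qed
  have "(\<lambda>v::real^'k. v $ k) \<in> borel_measurable borel"
    by (intro borel_measurable_continuous_onI linear_continuous_on bounded_linear_vec_nth)
  with assms(2) show "(\<lambda>\<omega>. U \<omega> $ k) \<in> borel_measurable M"
    by (rule measurable_compose)
qed

lemma axis_in_prob_simplex: "axis k 1 \<in> prob_simplex"
  by (simp add: prob_simplex_def axis_def)

lemma integral_var_h:
  assumes "prob_space M" "V \<in> measurable M N"
    and "integrable M (\<lambda>\<omega>. h (U \<omega>))" "integrable M (\<lambda>\<omega>. h (cexp_vec M V N U \<omega>))"
  shows "(\<integral>\<omega>. var_h M h V N U \<omega> \<partial>M)
           = (\<integral>\<omega>. h (U \<omega>) \<partial>M) - (\<integral>\<omega>. h (cexp_vec M V N U \<omega>) \<partial>M)"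
proof -
  interpret sigma_finite_subalgebra M "gen_alg M V N"
    by (rule sigma_finite_subalgebra_gen_alg[OF assms(1,2)])
  show ?thesis
    unfolding var_h_def cexp_def
    using real_cond_exp_int[OF assms(3)] assms(4) by simp
qed

lemma cexp_vec_cexp_vec_coarser:
  assumes "prob_space M" "V \<in> measurable M N" "W \<in> measurable (gen_alg M V N) N'"
    and "\<And>k. integrable M (\<lambda>\<omega>. U \<omega> $ k)"
  shows "AE \<omega> in M. cexp_vec M W N' (cexp_vec M V N U) \<omega> = cexp_vec M W N' U \<omega>"
proof -
  have sub: "subalgebra M (gen_alg M V N)"
    using sigma_finite_subalgebra.subalg[OF sigma_finite_subalgebra_gen_alg[OF assms(1,2)]] .
  then have "W \<in> measurable M N'"
    using assms(3) by (rule measurable_from_subalg)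
  then interpret sigma_finite_subalgebra M "gen_alg M W N'"
    by (rule sigma_finite_subalgebra_gen_alg[OF assms(1)])
  have "AE \<omega> in M. \<forall>k\<in>UNIV. cexp_vec M W N' (cexp_vec M V N U) \<omega> $ k = cexp_vec M W N' U \<omega> $ k"
    unfolding cexp_vec_nth
    using real_cond_exp_nested_subalg[OF sub subalgebra_gen_alg_coarser[OF assms(3)] assms(4)]
    by (intro AE_finite_allI) auto
  then show ?thesis
    by (simp add: vec_eq_iff)
qed

lemma integral_var_h_coarser:
  assumes "prob_space M" "V \<in> measurable M N" "W \<in> measurable (gen_alg M V N) N'"
    and "\<And>k. integrable M (\<lambda>\<omega>. U \<omega> $ k)"
    and "integrable M (\<lambda>\<omega>. h (U \<omega>))" "integrable M (\<lambda>\<omega>. h (cexp_vec M V N U \<omega>))"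
    and "integrable M (\<lambda>\<omega>. h (cexp_vec M W N' U \<omega>))"
    and "integrable M (\<lambda>\<omega>. h (cexp_vec M W N' (cexp_vec M V N U) \<omega>))"
  shows "(\<integral>\<omega>. var_h M h W N' U \<omega> \<partial>M)
           = (\<integral>\<omega>. var_h M h V N U \<omega> \<partial>M) + (\<integral>\<omega>. var_h M h W N' (cexp_vec M V N U) \<omega> \<partial>M)"
proof -
  have "W \<in> measurable M N'"
    using measurable_from_subalg[OF sigma_finite_subalgebra.subalg[OF sigma_finite_subalgebra_gen_alg[OF assms(1,2)]] assms(3)] .
  moreover have "(\<integral>\<omega>. h (cexp_vec M W N' (cexp_vec M V N U) \<omega>) \<partial>M) = (\<integral>\<omega>. h (cexp_vec M W N' U \<omega>) \<partial>M)"
    using cexp_vec_cexp_vec_coarser[OF assms(1-4)] assms(7,8) by (intro integral_cong_AE) (auto elim: AE_mp)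
  ultimately show ?thesis
    using assms by (simp add: integral_var_h)
qed

lemma borel_measurable_binned_gen_alg:
  assumes "\<forall>B\<in>\<B>. B \<in> sets borel"
  shows "binned M S \<B> \<in> borel_measurable (gen_alg M S borel)"
  unfolding binned_def gen_alg_def using assms
  by (intro borel_measurable_sum borel_measurable_scaleR borel_measurable_indicator
      borel_measurable_const in_vimage_algebra) auto

lemma finite_image_binned:
  assumes "finite \<B>"
  shows "finite (binned M S \<B> ` A)"
proof -
  let ?m = "\<lambda>B. bin_mean M S (S -` B \<inter> space M)"
  have "binned M S \<B> \<omega> = (\<Sum>B\<in>{B\<in>\<B>. \<omega> \<in> S -` B \<inter> space M}. ?m B)" for \<omega>
  proof -
    have "binned M S \<B> \<omega> = (\<Sum>B\<in>\<B>. if \<omega> \<in> S -` B \<inter> space M then ?m B else 0)"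
      by (auto simp: binned_def indicator_def intro!: sum.cong)
    also have "\<dots> = (\<Sum>B\<in>{B\<in>\<B>. \<omega> \<in> S -` B \<inter> space M}. ?m B)"
      using assms by (simp add: sum.inter_filter)
    finally show ?thesis .
  qed
  then have "binned M S \<B> ` A \<subseteq> (\<lambda>\<C>. \<Sum>B\<in>\<C>. ?m B) ` Pow \<B>"
    by blast
  then show ?thesis
    using assms finite_subset by blast
qed

lemma integral_s_phi_cexp_vec:
  fixes V :: "'a \<Rightarrow> 'b::t1_space" and C :: "'a \<Rightarrow> real^'k::finite"
  assumes "prob_space M" "V \<in> borel_measurable M" "finite (V ` space M)"
    and "\<And>k. integrable M (\<lambda>\<omega>. C \<omega> $ k)"
  defines "D \<equiv> cexp_vec M V borel C"
  shows "integrable M (\<lambda>\<omega>. s_phi \<phi> (D \<omega>) (D \<omega>))"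
    and "integrable M (\<lambda>\<omega>. s_phi \<phi> (D \<omega>) (C \<omega>))"
    and "(\<integral>\<omega>. s_phi \<phi> (D \<omega>) (D \<omega>) \<partial>M) = (\<integral>\<omega>. s_phi \<phi> (D \<omega>) (C \<omega>) \<partial>M)"
proof -
  interpret sigma_finite_subalgebra M "gen_alg M V borel"
    by (rule sigma_finite_subalgebra_gen_alg[OF assms(1,2)])
  define score where "score k \<omega> = \<phi> (D \<omega>) (axis k 1)" for k \<omega>
  have "D \<omega> = D \<omega>'" if "\<omega> \<in> space M" "\<omega>' \<in> space M" "V \<omega> = V \<omega>'" for \<omega> \<omega>'
    unfolding D_def vec_eq_iff
    by (intro allI measurable_gen_alg_fiberwise_const[OF borel_measurable_cexp_vec_nth _ that]) simp
  then have score_fiberwise: "score k \<omega> = score k \<omega>'"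
    if "\<omega> \<in> space M" "\<omega>' \<in> space M" "V \<omega> = V \<omega>'" for k \<omega> \<omega>'
    using that unfolding score_def by metis
  have score_gen_alg: "score k \<in> borel_measurable (gen_alg M V borel)" for k
    using assms(3) score_fiberwise by (rule measurable_gen_alg_finite_range)
  have score_finite: "finite (score k ` space M)" for k
    using assms(3) score_fiberwise by (rule finite_image_fiberwise_const)
  have score_M: "score k \<in> borel_measurable M" for k
    using subalg score_gen_alg by (rule measurable_from_subalg)
  have score_C: "integrable M (\<lambda>\<omega>. score k \<omega> * C \<omega> $ k)" for k
    using score_finite score_M assms(4) by (rule integrable_finite_range_mult)
  have score_D: "integrable M (\<lambda>\<omega>. score k \<omega> * D \<omega> $ k)"
    "(\<integral>\<omega>. score k \<omega> * D \<omega> $ k \<partial>M) = (\<integral>\<omega>. score k \<omega> * C \<omega> $ k \<partial>M)" for k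
    using real_cond_exp_intg[OF score_C score_gen_alg borel_measurable_integrable[OF assms(4)]]
    unfolding D_def cexp_vec_nth by auto
  have s_phi_D: "s_phi \<phi> (D \<omega>) q = (\<Sum>k\<in>UNIV. score k \<omega> * q $ k)" for \<omega> q
    by (simp add: s_phi_def score_def)
  show "integrable M (\<lambda>\<omega>. s_phi \<phi> (D \<omega>) (D \<omega>))" "integrable M (\<lambda>\<omega>. s_phi \<phi> (D \<omega>) (C \<omega>))"
    unfolding s_phi_D using score_C score_D(1) by auto
  show "(\<integral>\<omega>. s_phi \<phi> (D \<omega>) (D \<omega>) \<partial>M) = (\<integral>\<omega>. s_phi \<phi> (D \<omega>) (C \<omega>) \<partial>M)"
    unfolding s_phi_D using score_C score_D by (simp add: Bochner_Integration.integral_sum)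
qed

lemma integral_var_h_nonneg_finite_range:
  fixes V :: "'a \<Rightarrow> 'b::t1_space" and C :: "'a \<Rightarrow> real^'k::finite"
  assumes "prob_space M" "V \<in> borel_measurable M" "finite (V ` space M)" "proper_scoring \<phi>"
    and "\<And>k. integrable M (\<lambda>\<omega>. C \<omega> $ k)" "AE \<omega> in M. C \<omega> \<in> prob_simplex"
    and "integrable M (\<lambda>\<omega>. s_phi \<phi> (C \<omega>) (C \<omega>))"
  shows "(\<integral>\<omega>. var_h M (\<lambda>p. - s_phi \<phi> p p) V borel C \<omega> \<partial>M) \<ge> 0"
proof -
  define D where "D = cexp_vec M V borel C"
  note D_score = integral_s_phi_cexp_vec[OF assms(1-3,5), of \<phi>, folded D_def]
  have "AE \<omega> in M. D \<omega> \<in> prob_simplex"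
    unfolding D_def using assms(1,2,5,6) by (rule cexp_vec_in_prob_simplex)
  with assms(6) have "AE \<omega> in M. s_phi \<phi> (C \<omega>) (C \<omega>) \<le> s_phi \<phi> (D \<omega>) (C \<omega>)"
    by eventually_elim (use assms(4) in \<open>auto simp: proper_scoring_def d_phi_def\<close>)
  then have "(\<integral>\<omega>. s_phi \<phi> (C \<omega>) (C \<omega>) \<partial>M) \<le> (\<integral>\<omega>. s_phi \<phi> (D \<omega>) (C \<omega>) \<partial>M)"
    using assms(7) D_score(2) by (intro integral_mono_AE)
  also have "\<dots> = (\<integral>\<omega>. s_phi \<phi> (D \<omega>) (D \<omega>) \<partial>M)"
    using D_score(3) by simp
  finally show ?thesis
    using integral_var_h[OF assms(1,2), where h = "\<lambda>p. - s_phi \<phi> p p" and U = C] assms(7) D_score(1)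
    unfolding D_def by simp
qed

theorem proposition1:
  fixes M :: "'a measure" and MX :: "'x measure" and X :: "'a \<Rightarrow> 'x"
    and Y :: "'a \<Rightarrow> real^'k::finite" and f :: "'x \<Rightarrow> real^'k"
    and \<phi> :: "real^'k \<Rightarrow> real^'k \<Rightarrow> real" and \<B> :: "(real^'k) set set"
  assumes "prob_space M"
    and "X \<in> measurable M MX"
    and "Y \<in> borel_measurable M"
    and "\<forall>\<omega>\<in>space M. \<exists>k. Y \<omega> = axis k 1"
    and "f \<in> borel_measurable MX"
    and "\<forall>x\<in>space MX. f x \<in> prob_simplex"
    and "finite \<B>" and "partition_on prob_simplex \<B>" and "\<forall>B\<in>\<B>. B \<in> sets borel"
  defines "h \<equiv> (\<lambda>p. - s_phi \<phi> p p)"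
    and "Q \<equiv> cexp_vec M X MX Y"
    and "S \<equiv> (\<lambda>\<omega>. f (X \<omega>))"
    and "C \<equiv> cexp_vec M (\<lambda>\<omega>. f (X \<omega>)) borel (cexp_vec M X MX Y)"
    and "SB \<equiv> binned M (\<lambda>\<omega>. f (X \<omega>)) \<B>"
  assumes "integrable M (\<lambda>\<omega>. h (Q \<omega>))"
    and "integrable M (\<lambda>\<omega>. h (C \<omega>))"
    and "integrable M (\<lambda>\<omega>. h (cexp_vec M SB borel Q \<omega>))"
    and "integrable M (\<lambda>\<omega>. h (cexp_vec M SB borel C \<omega>))"
  shows "((\<integral>\<omega>. var_h M h SB borel Q \<omega> \<partial>M)
           = (\<integral>\<omega>. var_h M h S borel Q \<omega> \<partial>M) + (\<integral>\<omega>. var_h M h SB borel C \<omega> \<partial>M))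
         \<and> (proper_scoring \<phi> \<longrightarrow> (\<integral>\<omega>. var_h M h SB borel C \<omega> \<partial>M) \<ge> 0)"
proof -
  have S_meas: "S \<in> borel_measurable M"
    unfolding S_def using assms(2,5) by measurable
  have SB_S: "SB \<in> borel_measurable (gen_alg M S borel)"
    unfolding SB_def S_def using assms(9) by (rule borel_measurable_binned_gen_alg)
  have SB_meas: "SB \<in> borel_measurable M"
    using sigma_finite_subalgebra.subalg[OF sigma_finite_subalgebra_gen_alg[OF assms(1) S_meas]] SB_S
    by (rule measurable_from_subalg)
  have Y_simplex: "AE \<omega> in M. Y \<omega> \<in> prob_simplex"
    using assms(4) by (intro AE_I2) (auto simp: axis_in_prob_simplex)
  have Y_int: "integrable M (\<lambda>\<omega>. Y \<omega> $ k)" for k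
    using assms(1,3) Y_simplex by (rule integrable_nth_prob_simplex)
  have Q_simplex: "AE \<omega> in M. Q \<omega> \<in> prob_simplex"
    unfolding Q_def using assms(1,2) Y_int Y_simplex by (rule cexp_vec_in_prob_simplex)
  have Q_int: "integrable M (\<lambda>\<omega>. Q \<omega> $ k)" for k
    unfolding Q_def using assms(1,2) Y_int by (rule integrable_cexp_vec_nth)
  have C_eq: "C = cexp_vec M S borel Q"
    by (simp add: C_def S_def Q_def)
  have C_int: "integrable M (\<lambda>\<omega>. C \<omega> $ k)" for k
    unfolding C_eq using assms(1) S_meas Q_int by (rule integrable_cexp_vec_nth)
  have C_simplex: "AE \<omega> in M. C \<omega> \<in> prob_simplex"
    unfolding C_eq using assms(1) S_meas Q_int Q_simplex
    by (rule cexp_vec_in_prob_simplex)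
  have "(\<integral>\<omega>. var_h M h SB borel Q \<omega> \<partial>M)
      = (\<integral>\<omega>. var_h M h S borel Q \<omega> \<partial>M) + (\<integral>\<omega>. var_h M h SB borel C \<omega> \<partial>M)"
    using assms(1) S_meas SB_S Q_int assms(15-18) unfolding C_eq
    by (rule integral_var_h_coarser)
  moreover have "(\<integral>\<omega>. var_h M h SB borel C \<omega> \<partial>M) \<ge> 0" if "proper_scoring \<phi>"
  proof -
    have "finite (SB ` space M)"
      unfolding SB_def using assms(7) by (rule finite_image_binned)
    moreover have "integrable M (\<lambda>\<omega>. s_phi \<phi> (C \<omega>) (C \<omega>))"
      using assms(16) by (simp add: h_def)
    ultimately show ?thesis
      unfolding h_def by (rule integral_var_h_nonneg_finite_range[OF assms(1) SB_meas _ that C_int C_simplex])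
  qed
  ultimately show ?thesis
    by blast
qed

end
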